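(* Let $A>0$, $B>0$ and $0<v_{\mathrm{nozzle}}<1$. There exist $w>0$, $t_{\mathrm{end}}>0$ and $v\in C^1([0,t_{\mathrm{end}}])$ solving $$v'(t)=-v(t)^2\Big(\sqrt{A^2t^2+w}+v(t)\Big),\quad v(0)=1,\quad v(t_{\mathrm{end}})=v_{\mathrm{nozzle}},\quad \int_0^{t_{\mathrm{end}}}\frac{At\,v(t)}{\sqrt{A^2t^2+w}}\,dt=B$$ (equivalently, a curved-jet solution of the dimensionless model: $v(s),\Theta(s)$ on $[0,s_{\mathrm{end}}]$ with $(v+v'/v)'=-A\sin\Theta/v$, $\Theta'=-A\cos\Theta/(v(v+v'/v))$, $v(0)=1$, $v(s_{\mathrm{end}})=v_{\mathrm{nozzle}}$, $\Theta(0)=0$, $\int_0^{s_{\mathrm{end}}}\sin\Theta\,ds=B$, with $v+v'/v<0$, obtained via $ds=v\,dt$, $\sin\Theta=At/\sqrt{A^2t^2+w}$) if and only if $$I(0;A,v_{\mathrm{nozzle}})>B.$$ If such a solution exists, it is unique.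
   Context: For $A>0$ and $w\ge0$, $v(\cdot;w):[0,\infty)\to(0,1]$ denotes the unique solution of $v'=-v^2(\sqrt{A^2t^2+w}+v)$, $v(0)=1$; it is strictly decreasing in $t$ and tends to $0$ as $t\to\infty$. For $0<v_{\mathrm{nozzle}}<1$, $t_{\mathrm{end}}(w)>0$ is the unique time with $v(t_{\mathrm{end}}(w);w)=v_{\mathrm{nozzle}}$, and $$I(w)=I(w;A,v_{\mathrm{nozzle}})=\int_0^{t_{\mathrm{end}}(w)}\frac{At\,v(t;w)}{\sqrt{A^2t^2+w}}\,dt.$$ In particular $I(0;A,v_{\mathrm{nozzle}})=\int_0^{t_{\mathrm{end}}(0)}v(t;0)\,dt$. Here $A=g\mu/v_{\mathrm{belt}}^3$, $B=v_{\mathrm{belt}}L/\mu$, and $v_{\mathrm{nozzle}}$ is the ratio of nozzle velocity to belt velocity. *)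

theory Defs
  imports "HOL-Analysis.Analysis"
begin

definition jet_rhs :: "real \<Rightarrow> real \<Rightarrow> real \<Rightarrow> real \<Rightarrow> real" where
  "jet_rhs A w t x = - (x^2) * (sqrt (A^2 * t^2 + w) + x)"

text \<open>The global solution v(.;w) on [0,oo) with v(0)=1; for t<0 it is extended
  by the constant 1 (an arbitrary normalisation making THE well defined).\<close>
definition v_sol :: "real \<Rightarrow> real \<Rightarrow> real \<Rightarrow> real" where
  "v_sol A w = (THE f. f 0 = 1 \<and>
      (\<forall>t\<ge>0. (f has_real_derivative jet_rhs A w t (f t)) (at t within {0..})) \<and>
      (\<forall>t<0. f t = 1))"

definition t_end :: "real \<Rightarrow> real \<Rightarrow> real \<Rightarrow> real" where
  "t_end A vn w = (THE t. t \<ge> 0 \<and> v_sol A w t = vn)"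

definition I_fun :: "real \<Rightarrow> real \<Rightarrow> real \<Rightarrow> real" where
  "I_fun A vn w = integral {0..t_end A vn w}
      (\<lambda>t. A * t * v_sol A w t / sqrt (A^2 * t^2 + w))"

definition jet_solution :: "real \<Rightarrow> real \<Rightarrow> real \<Rightarrow> real \<Rightarrow> real \<Rightarrow> (real \<Rightarrow> real) \<Rightarrow> bool" where
  "jet_solution A B vn w te v \<longleftrightarrow>
     w > 0 \<and> te > 0 \<and>
     (\<exists>v'. continuous_on {0..te} v' \<and>
        (\<forall>t\<in>{0..te}. (v has_real_derivative v' t) (at t within {0..te}) \<and>
                       v' t = jet_rhs A w t (v t))) \<and>
     v 0 = 1 \<and> v te = vn \<and>
     integral {0..te} (\<lambda>t. A * t * v t / sqrt (A^2 * t^2 + w)) = B"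

end

theory Submission
  imports Defs
begin

(*
  Writing u = 1 / v turns the equation into u' = sqrt (A^2 t^2 + w) + 1 / u, u(0) = 1. Its
  right-hand side grows only linearly in t, so there is a global solution u >= 1 (a contraction
  argument in an exponentially weighted sup norm); u is strictly increasing with u^2 >= 1 + 2 t,
  so t_end(w) exists. Comparison arguments give u(.;w1) <= u(.;w2) <= u(.;w1) + t (sqrt w2 - sqrt w1)
  for w1 <= w2, whence I is strictly decreasing in w and Lipschitz in sqrt w. Since moreover
  I(w) <= t_end(w) <= 1 / (v_nozzle sqrt w), the intermediate value theorem gives a w > 0 with
  I(w) = B exactly when I(0) > B, and this w is unique. Uniqueness for the ODE identifies every
  solution of the boundary value problem with v(.;w) on [0, t_end(w)].
*)

lemma has_real_derivative_nonneg_imp_le: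
  fixes f :: "real \<Rightarrow> real"
  assumes "a \<le> b"
    and deriv: "\<And>t. t \<in> {a..b} \<Longrightarrow> (f has_real_derivative f' t) (at t within {a..b})"
    and nonneg: "\<And>t. t \<in> {a..b} \<Longrightarrow> 0 \<le> f' t"
  shows "f a \<le> f b"
proof (rule DERIV_nonneg_imp_increasing_open[OF \<open>a \<le> b\<close> _ DERIV_continuous_on[OF deriv]])
  fix x assume "a < x" "x < b"
  then show "\<exists>y. DERIV f x :> y \<and> 0 \<le> y"
    using deriv[of x] nonneg[of x] at_within_Icc_at by fastforce
qed

lemma has_real_derivative_pos_imp_less:
  fixes f :: "real \<Rightarrow> real"
  assumes "a < b"
    and deriv: "\<And>t. t \<in> {a..b} \<Longrightarrow> (f has_real_derivative f' t) (at t within {a..b})"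
    and pos: "\<And>t. t \<in> {a..b} \<Longrightarrow> 0 < f' t"
  shows "f a < f b"
proof (rule DERIV_pos_imp_increasing_open[OF \<open>a < b\<close> _ DERIV_continuous_on[OF deriv]])
  fix x assume "a < x" "x < b"
  then show "\<exists>y. DERIV f x :> y \<and> 0 < y"
    using deriv[of x] pos[of x] at_within_Icc_at by fastforce
qed

lemma divide_le_self_of_one_le: "0 \<le> a \<Longrightarrow> 1 \<le> b \<Longrightarrow> a / b \<le> (a::real)"
  using mult_left_mono[of 1 b a] by (simp add: divide_le_eq)

lemma dist_inverse_max_one_le: "\<bar>1 / max (a::real) 1 - 1 / max b 1\<bar> \<le> \<bar>a - b\<bar>"
proof -
  have "\<bar>1 / max a 1 - 1 / max b 1\<bar> = \<bar>max b 1 - max a 1\<bar> / (max a 1 * max b 1)"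
    by (simp add: field_simps abs_div)
  also have "\<dots> \<le> \<bar>max b 1 - max a 1\<bar>"
    by (rule divide_le_self_of_one_le) (auto intro: order_trans[OF _ mult_mono[of 1 _ 1]])
  also have "\<dots> \<le> \<bar>a - b\<bar>" by auto
  finally show ?thesis .
qed

lemma integral_exp_2: "0 \<le> (x::real) \<Longrightarrow> integral {0..x} (\<lambda>\<tau>. exp (2 * \<tau>)) = (exp (2 * x) - 1) / 2"
proof -
  assume "0 \<le> x"
  have "((\<lambda>\<tau>. exp (2 * \<tau>)) has_integral (exp (2 * x) / 2 - exp (2 * 0) / 2)) {0..x}"
    by (rule fundamental_theorem_of_calculus[of 0 x "\<lambda>\<tau>. exp (2 * \<tau>) / 2", OF \<open>0 \<le> x\<close>])
       (auto intro!: derivative_eq_intros simp: has_real_derivative_iff_has_vector_derivative[symmetric])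
  then show ?thesis by (simp add: integral_unique diff_divide_distrib)
qed

lemma sqrt_increment_shift_le:
  fixes a w1 w2 :: real
  assumes "0 \<le> a" "0 \<le> w1" "w1 \<le> w2"
  shows "sqrt (a + w2) - sqrt (a + w1) \<le> sqrt w2 - sqrt w1"
proof -
  define R where "R = sqrt (a + w1) + (sqrt w2 - sqrt w1)"
  have m: "sqrt w1 \<le> sqrt w2" "sqrt w1 \<le> sqrt (a + w1)" using assms by auto
  have "a + w2 = (a + w1) + (sqrt w2 - sqrt w1)\<^sup>2 + 2 * sqrt w1 * (sqrt w2 - sqrt w1)"
    using assms by (simp add: power2_eq_square algebra_simps)
  also have "\<dots> \<le> (a + w1) + (sqrt w2 - sqrt w1)\<^sup>2 + 2 * sqrt (a + w1) * (sqrt w2 - sqrt w1)"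
    using m by (intro add_left_mono mult_right_mono) auto
  also have "\<dots> = R\<^sup>2"
    unfolding R_def using assms by (simp add: power2_eq_square algebra_simps)
  finally have "sqrt (a + w2) \<le> R"
    by (rule real_le_lsqrt[rotated]) (use m assms in \<open>auto simp: R_def\<close>)
  then show ?thesis unfolding R_def by simp
qed

lemma sqrt_increment_strict_antimono:
  fixes a w1 w2 :: real
  assumes "0 < a" "0 \<le> w1" "w1 < w2"
  shows "sqrt (a + w2) - sqrt w2 < sqrt (a + w1) - sqrt w1"
proof -
  have rationalize: "sqrt (a + w) - sqrt w = a / (sqrt (a + w) + sqrt w)" if "0 \<le> w" for w
  proof -
    have "0 < sqrt (a + w) + sqrt w" using assms that by (simp add: add_pos_nonneg)
    moreover have "(sqrt (a + w) - sqrt w) * (sqrt (a + w) + sqrt w) = a"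
      using assms that by (simp add: algebra_simps)
    ultimately show ?thesis by (simp add: field_simps)
  qed
  have "0 < sqrt (a + w1) + sqrt w1" using assms by (simp add: add_pos_nonneg)
  moreover have "sqrt (a + w1) + sqrt w1 < sqrt (a + w2) + sqrt w2"
    using assms by (intro add_strict_mono) auto
  ultimately show ?thesis
    using assms by (simp add: rationalize divide_strict_left_mono)
qed

lemma nonneg_by_integrating_factor:
  fixes d k r :: "real \<Rightarrow> real"
  assumes "0 \<le> T" and k: "continuous_on {0..T} k" and "d 0 = 0"
    and deriv: "\<And>t. t \<in> {0..T} \<Longrightarrow> (d has_real_derivative r t - k t * d t) (at t within {0..T})"
    and r: "\<And>t. t \<in> {0..T} \<Longrightarrow> 0 \<le> r t"
  shows "0 \<le> d T"
proof -
  define K where "K t = integral {0..t} k" for t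
  have "(\<lambda>t. exp (K t) * d t) 0 \<le> (\<lambda>t. exp (K t) * d t) T"
  proof (rule has_real_derivative_nonneg_imp_le[OF \<open>0 \<le> T\<close>])
    fix t assume t: "t \<in> {0..T}"
    have "(K has_real_derivative k t) (at t within {0..T})"
      unfolding K_def by (rule integral_has_real_derivative[OF k t])
    then show "((\<lambda>t. exp (K t) * d t) has_real_derivative exp (K t) * r t) (at t within {0..T})"
      by (auto intro!: derivative_eq_intros deriv[OF t] simp: algebra_simps)
    show "0 \<le> exp (K t) * r t" using r[OF t] by simp
  qed
  then show ?thesis using \<open>d 0 = 0\<close> by (simp add: zero_le_mult_iff)
qed

section \<open>Global solutions of \<open>u' = c t + 1 / u\<close>\<close>

text \<open>Picard iteration for \<open>u' = c t + 1 / u\<close>, \<open>u 0 = 1\<close>, on \<open>[0, \<infinity>)\<close>. The unknown is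
  \<open>y t = exp (- 2 t) u t\<close>: in this weight the Picard map is a contraction of
  bounded continuous functions with constant \<open>1/2\<close>. Capping \<open>u\<close> below by \<open>1\<close> makes
  \<open>1 / u\<close> globally Lipschitz; a fixed point satisfies \<open>u \<ge> 1\<close> anyway.\<close>

definition recip_integrand :: "(real \<Rightarrow> real) \<Rightarrow> (real \<Rightarrow>\<^sub>C real) \<Rightarrow> real \<Rightarrow> real" where
  "recip_integrand c y \<tau> = c \<tau> + 1 / max (exp (2 * \<tau>) * apply_bcontfun y \<tau>) 1"

definition recip_picard :: "(real \<Rightarrow> real) \<Rightarrow> (real \<Rightarrow>\<^sub>C real) \<Rightarrow> real \<Rightarrow> real" where
  "recip_picard c y t =
     exp (- 2 * max t 0) * (1 + integral {0..max t 0} (recip_integrand c y))"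

lemma recip_integrand_dist:
  "\<bar>recip_integrand c y \<tau> - recip_integrand c z \<tau>\<bar> \<le> exp (2 * \<tau>) * dist y z"
proof -
  have "\<bar>recip_integrand c y \<tau> - recip_integrand c z \<tau>\<bar>
      \<le> \<bar>exp (2 * \<tau>) * apply_bcontfun y \<tau> - exp (2 * \<tau>) * apply_bcontfun z \<tau>\<bar>"
    unfolding recip_integrand_def using dist_inverse_max_one_le by simp
  also have "\<dots> = exp (2 * \<tau>) * dist (apply_bcontfun y \<tau>) (apply_bcontfun z \<tau>)"
    by (simp add: dist_real_def abs_mult right_diff_distrib[symmetric])
  also have "\<dots> \<le> exp (2 * \<tau>) * dist y z"
    by (intro mult_left_mono dist_bounded) auto
  finally show ?thesis .
qed

context
  fixes c :: "real \<Rightarrow> real" and M :: real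
  assumes c_cont: "continuous_on {0..} c"
    and c_nonneg: "\<And>t. 0 \<le> t \<Longrightarrow> 0 \<le> c t"
    and c_le_linear: "\<And>t. 0 \<le> t \<Longrightarrow> c t \<le> M * (1 + t)"
begin

lemma recip_integrand_continuous: "continuous_on {0..} (recip_integrand c y)"
  unfolding recip_integrand_def by (intro continuous_intros c_cont) auto

lemma recip_integrand_integrable: "0 \<le> a \<Longrightarrow> recip_integrand c y integrable_on {a..b}"
  by (rule integrable_continuous_interval, rule continuous_on_subset[OF recip_integrand_continuous])
     auto

lemma recip_integrand_bounds:
  assumes "0 \<le> \<tau>"
  shows "0 \<le> recip_integrand c y \<tau>" "recip_integrand c y \<tau> \<le> M * (1 + \<tau>) + 1"
proof -
  have "0 \<le> 1 / max (exp (2 * \<tau>) * apply_bcontfun y \<tau>) 1" "1 / max (exp (2 * \<tau>) * apply_bcontfun y \<tau>) 1 \<le> 1"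
    by auto
  then show "0 \<le> recip_integrand c y \<tau>" "recip_integrand c y \<tau> \<le> M * (1 + \<tau>) + 1"
    using c_nonneg[OF assms] c_le_linear[OF assms] unfolding recip_integrand_def by linarith+
qed

lemma recip_picard_continuous: "continuous_on UNIV (recip_picard c y)"
proof -
  have "isCont (recip_picard c y) t" for t
  proof -
    define b where "b = \<bar>t\<bar> + 1"
    have "continuous_on {0..b} (\<lambda>x. integral {0..x} (recip_integrand c y))"
      by (rule indefinite_integral_continuous_1[OF recip_integrand_integrable]) simp
    then have "continuous_on {-b<..<b} (\<lambda>t. integral {0..max t 0} (recip_integrand c y))"
      by (rule continuous_on_compose2[where f="\<lambda>t. max t 0"]) (auto intro!: continuous_intros)
    then have "continuous_on {-b<..<b} (recip_picard c y)"
      unfolding recip_picard_def by (intro continuous_intros)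
    then show ?thesis by (rule continuous_on_interior) (auto simp: b_def)
  qed
  then show ?thesis by (simp add: continuous_at_imp_continuous_on)
qed

lemma recip_picard_bounded: "norm (recip_picard c y t) \<le> M + 2"
proof -
  define x where "x = max t 0"
  define G where "G = integral {0..x} (recip_integrand c y)"
  have x: "0 \<le> x" by (simp add: x_def)
  have M: "0 \<le> M" using c_nonneg[of 0] c_le_linear[of 0] by simp
  have bound: "recip_integrand c y \<tau> \<le> M * (1 + x) + 1" if "\<tau> \<in> {0..x}" for \<tau>
    using recip_integrand_bounds(2)[of \<tau> y] mult_left_mono[of "1 + \<tau>" "1 + x" M] M that by auto
  have G_nonneg: "0 \<le> G"
    unfolding G_def by (intro integral_nonneg recip_integrand_integrable recip_integrand_bounds(1)) auto
  have "G \<le> integral {0..x} (\<lambda>_. M * (1 + x) + 1)"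
    unfolding G_def by (rule integral_le[OF recip_integrand_integrable integrable_const_ivl bound]) auto
  then have "1 + G \<le> 1 + x * (M * (1 + x) + 1)" using x by simp
  also have "\<dots> \<le> (M + 2) * (1 + x)\<^sup>2"
    using x M by (simp add: power2_eq_square algebra_simps)
  also have "\<dots> \<le> (M + 2) * exp (2 * x)"
  proof (rule mult_left_mono)
    have "(1 + x)\<^sup>2 \<le> (exp x)\<^sup>2"
      using x by (intro power_mono) (auto simp: add.commute exp_ge_add_one_self)
    then show "(1 + x)\<^sup>2 \<le> exp (2 * x)" by (simp add: power2_eq_square mult_exp_exp)
  qed (use M in simp)
  finally have "exp (- 2 * x) * (1 + G) \<le> exp (- 2 * x) * ((M + 2) * exp (2 * x))"
    by (rule mult_left_mono) simp
  also have "\<dots> = M + 2" by (simp add: mult_exp_exp)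
  finally have "exp (- 2 * x) * (1 + G) \<le> M + 2" .
  then show ?thesis using G_nonneg by (simp add: recip_picard_def x_def G_def)
qed

lemma recip_picard_bcontfun: "recip_picard c y \<in> bcontfun"
  by (rule bcontfun_normI[OF recip_picard_continuous recip_picard_bounded])

lemma recip_picard_contraction:
  "dist (Bcontfun (recip_picard c y)) (Bcontfun (recip_picard c z)) \<le> 1/2 * dist y z"
proof (rule dist_bound)
  fix t :: real
  define x where "x = max t 0"
  have x: "0 \<le> x" by (simp add: x_def)
  have "\<bar>integral {0..x} (recip_integrand c y) - integral {0..x} (recip_integrand c z)\<bar>
      = norm (integral {0..x} (\<lambda>\<tau>. recip_integrand c y \<tau> - recip_integrand c z \<tau>))"
    by (simp add: integral_diff recip_integrand_integrable)
  also have "\<dots> \<le> integral {0..x} (\<lambda>\<tau>. exp (2 * \<tau>) * dist y z)"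
  proof (rule integral_norm_bound_integral)
    show "(\<lambda>\<tau>. recip_integrand c y \<tau> - recip_integrand c z \<tau>) integrable_on {0..x}"
      by (intro integrable_diff recip_integrand_integrable) simp_all
    show "(\<lambda>\<tau>. exp (2 * \<tau>) * dist y z) integrable_on {0..x}"
      by (intro integrable_continuous_interval continuous_intros)
  qed (simp add: recip_integrand_dist)
  also have "\<dots> = (exp (2 * x) - 1) / 2 * dist y z" using integral_exp_2[OF x] by simp
  finally have I: "\<bar>integral {0..x} (recip_integrand c y) - integral {0..x} (recip_integrand c z)\<bar>
      \<le> (exp (2 * x) - 1) / 2 * dist y z" .
  have "dist (recip_picard c y t) (recip_picard c z t)
      = exp (- 2 * x) * \<bar>integral {0..x} (recip_integrand c y) - integral {0..x} (recip_integrand c z)\<bar>"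
    by (simp add: recip_picard_def x_def dist_real_def abs_mult right_diff_distrib[symmetric])
  also have "\<dots> \<le> exp (- 2 * x) * ((exp (2 * x) - 1) / 2 * dist y z)"
    using I by (intro mult_left_mono) auto
  also have "\<dots> = (1 - exp (- 2 * x)) / 2 * dist y z"
    by (simp add: field_simps mult_exp_exp)
  also have "\<dots> \<le> 1/2 * dist y z"
    by (intro mult_right_mono) auto
  finally show "dist (apply_bcontfun (Bcontfun (recip_picard c y)) t)
      (apply_bcontfun (Bcontfun (recip_picard c z)) t) \<le> 1/2 * dist y z"
    by (simp add: Bcontfun_inverse recip_picard_bcontfun)
qed

lemma recip_ode_solution_exists:
  obtains u where "u 0 = 1" "\<And>t. 0 \<le> t \<Longrightarrow> 1 \<le> u t"
    "\<And>t. 0 \<le> t \<Longrightarrow> (u has_real_derivative c t + 1 / u t) (at t within {0..})"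
proof -
  obtain y where "Bcontfun (recip_picard c y) = y"
    using banach_fix_type[of "1/2" "\<lambda>y. Bcontfun (recip_picard c y)"] recip_picard_contraction
    by auto
  then have fixed: "apply_bcontfun y t = recip_picard c y t" for t
    by (metis Bcontfun_inverse recip_picard_bcontfun)
  define G where "G t = integral {0..t} (recip_integrand c y)" for t
  define u where "u t = exp (2 * t) * apply_bcontfun y t" for t
  have u_eq: "u t = 1 + G t" if "0 \<le> t" for t
    using that by (simp add: u_def fixed recip_picard_def G_def mult_exp_exp)
  have u_ge_1: "1 \<le> u t" if "0 \<le> t" for t
    using u_eq[OF that] recip_integrand_bounds(1) unfolding G_def
    by (auto intro!: integral_nonneg recip_integrand_integrable)
  show ?thesis
  proof
    show "u 0 = 1" using u_eq[of 0] by (simp add: G_def)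
    fix t :: real assume t: "0 \<le> t"
    show "1 \<le> u t" by (rule u_ge_1[OF t])
    have "(G has_real_derivative recip_integrand c y t) (at t within {0..t+1})"
      unfolding G_def
      by (rule integral_has_real_derivative[OF continuous_on_subset[OF recip_integrand_continuous]])
         (use t in auto)
    moreover have "at t within {0..t+1} = at t within {0..}"
      by (rule at_within_nhd[of _ "{..<t+1}"]) auto
    ultimately have "((\<lambda>t. 1 + G t) has_real_derivative recip_integrand c y t) (at t within {0..})"
      by (auto intro!: derivative_eq_intros)
    then have "(u has_real_derivative recip_integrand c y t) (at t within {0..})"
      by (rule has_field_derivative_transform_within[where d=1]) (use t u_eq in auto)
    moreover have "recip_integrand c y t = c t + 1 / u t"
      using u_ge_1[OF t] by (simp add: recip_integrand_def u_def)
    ultimately show "(u has_real_derivative c t + 1 / u t) (at t within {0..})" by simp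
  qed
qed

end

section \<open>Uniqueness for the jet equation\<close>

text \<open>Uniqueness by the decay of \<open>exp (- 2 K t) (f t - g t)\<^sup>2\<close>.\<close>

lemma ode_unique_one_sided_lipschitz:
  fixes f g :: "real \<Rightarrow> real" and F :: "real \<Rightarrow> real \<Rightarrow> real"
  assumes df: "\<And>t. t \<in> {a..b} \<Longrightarrow> (f has_real_derivative F t (f t)) (at t within {a..b})"
    and dg: "\<And>t. t \<in> {a..b} \<Longrightarrow> (g has_real_derivative F t (g t)) (at t within {a..b})"
    and lip: "\<And>t. t \<in> {a..b} \<Longrightarrow> (f t - g t) * (F t (f t) - F t (g t)) \<le> K * (f t - g t)\<^sup>2"
    and init: "f a = g a"
    and t: "t \<in> {a..b}"
  shows "f t = g t"
proof -
  define d where "d t = f t - g t" for t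
  define \<phi> where "\<phi> t = exp (- 2 * K * t) * (d t)\<^sup>2" for t
  define \<phi>' where "\<phi>' t = exp (- 2 * K * t) *
      (2 * d t * (F t (f t) - F t (g t)) - 2 * K * (d t)\<^sup>2)" for t
  have "- \<phi> a \<le> - \<phi> t"
  proof (rule has_real_derivative_nonneg_imp_le[where f="\<lambda>t. - \<phi> t" and f'="\<lambda>t. - \<phi>' t"])
    fix x assume x: "x \<in> {a..t}"
    then have x': "x \<in> {a..b}" using t by auto
    have "(d has_real_derivative F x (f x) - F x (g x)) (at x within {a..t})"
      unfolding d_def
      by (rule has_field_derivative_subset[OF DERIV_diff[OF df[OF x'] dg[OF x']]]) (use t in auto)
    then have "(\<phi> has_real_derivative \<phi>' x) (at x within {a..t})"
      unfolding \<phi>_def \<phi>'_def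
      by (auto intro!: derivative_eq_intros simp: algebra_simps)
    then show "((\<lambda>t. - \<phi> t) has_real_derivative - \<phi>' x) (at x within {a..t})"
      by (rule DERIV_minus)
    have "d x * (F x (f x) - F x (g x)) \<le> K * (d x)\<^sup>2"
      using lip[OF x'] by (simp only: d_def)
    then have "2 * d x * (F x (f x) - F x (g x)) - 2 * K * (d x)\<^sup>2 \<le> 0" by linarith
    then show "0 \<le> - \<phi>' x" by (simp add: \<phi>'_def mult_le_0_iff)
  qed (use t in simp)
  then have "(f t - g t)\<^sup>2 \<le> 0" using init by (simp add: \<phi>_def d_def mult_le_0_iff)
  then show ?thesis by simp
qed

lemma jet_rhs_diff:
  "jet_rhs A w t x - jet_rhs A w t y =
     - (x - y) * ((x + y) * sqrt (A\<^sup>2 * t\<^sup>2 + w) + (x\<^sup>2 + x * y + y\<^sup>2))"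
  by (simp add: jet_rhs_def algebra_simps power2_eq_square power3_eq_cube)

lemma jet_rhs_one_sided_lipschitz:
  assumes "0 \<le> w" "\<bar>x\<bar> \<le> M" "\<bar>y\<bar> \<le> M" "sqrt (A\<^sup>2 * t\<^sup>2 + w) \<le> S"
  shows "(x - y) * (jet_rhs A w t x - jet_rhs A w t y) \<le> 2 * M * S * (x - y)\<^sup>2"
proof -
  let ?s = "sqrt (A\<^sup>2 * t\<^sup>2 + w)"
  have "x\<^sup>2 + x * y + y\<^sup>2 = (x + y / 2)\<^sup>2 + 3/4 * y\<^sup>2"
    by (simp add: power2_eq_square algebra_simps)
  then have "0 \<le> x\<^sup>2 + x * y + y\<^sup>2" by simp
  moreover have "- ((x + y) * ?s) \<le> 2 * M * S"
  proof -
    have "- (x + y) * ?s \<le> \<bar>x + y\<bar> * ?s" using assms(1) by (intro mult_right_mono) auto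
    also have "\<dots> \<le> (2 * M) * S" using assms by (intro mult_mono) auto
    finally show ?thesis by (simp add: algebra_simps)
  qed
  ultimately have "- ((x + y) * ?s + (x\<^sup>2 + x * y + y\<^sup>2)) \<le> 2 * M * S" by linarith
  then have "(x - y)\<^sup>2 * - ((x + y) * ?s + (x\<^sup>2 + x * y + y\<^sup>2)) \<le> (x - y)\<^sup>2 * (2 * M * S)"
    by (rule mult_left_mono) simp
  then show ?thesis by (simp add: jet_rhs_diff power2_eq_square algebra_simps)
qed

lemma jet_ode_unique:
  fixes f g :: "real \<Rightarrow> real"
  assumes "0 \<le> w"
    and df: "\<And>t. t \<in> {0..T} \<Longrightarrow> (f has_real_derivative jet_rhs A w t (f t)) (at t within {0..T})"
    and dg: "\<And>t. t \<in> {0..T} \<Longrightarrow> (g has_real_derivative jet_rhs A w t (g t)) (at t within {0..T})"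
    and "f 0 = g 0" and "t \<in> {0..T}"
  shows "f t = g t"
proof -
  obtain Mf where Mf: "\<And>t. t \<in> {0..T} \<Longrightarrow> norm (f t) \<le> Mf"
    using continuous_on_compact_bound[OF compact_Icc DERIV_continuous_on[OF df]] by blast
  obtain Mg where Mg: "\<And>t. t \<in> {0..T} \<Longrightarrow> norm (g t) \<le> Mg"
    using continuous_on_compact_bound[OF compact_Icc DERIV_continuous_on[OF dg]] by blast
  have "(f t - g t) * (jet_rhs A w t (f t) - jet_rhs A w t (g t))
      \<le> 2 * max Mf Mg * sqrt (A\<^sup>2 * T\<^sup>2 + w) * (f t - g t)\<^sup>2" if t: "t \<in> {0..T}" for t
  proof (rule jet_rhs_one_sided_lipschitz[OF \<open>0 \<le> w\<close>])
    show "\<bar>f t\<bar> \<le> max Mf Mg" "\<bar>g t\<bar> \<le> max Mf Mg" using Mf[OF t] Mg[OF t] by auto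
    have "t\<^sup>2 \<le> T\<^sup>2" using t by (intro power_mono) auto
    then show "sqrt (A\<^sup>2 * t\<^sup>2 + w) \<le> sqrt (A\<^sup>2 * T\<^sup>2 + w)" by (simp add: mult_left_mono)
  qed
  then show ?thesis
    using ode_unique_one_sided_lipschitz[where F="jet_rhs A w", OF df dg] assms(4,5) by blast
qed

section \<open>The solutions \<open>v(\<cdot>; w)\<close> and the integral \<open>I(w)\<close>\<close>

locale jet_model =
  fixes A :: real
  assumes A_pos: "0 < A"
begin

text \<open>\<open>u_sol w\<close> is the reciprocal \<open>1 / v(\<cdot>; w)\<close> of the jet velocity (\<open>v_sol_eq\<close> below).\<close>

definition u_sol :: "real \<Rightarrow> real \<Rightarrow> real" where
  "u_sol w = (SOME u. u 0 = 1 \<and> (\<forall>t\<ge>0. 1 \<le> u t \<and>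
     (u has_real_derivative sqrt (A\<^sup>2 * t\<^sup>2 + w) + 1 / u t) (at t within {0..})))"

lemma u_sol_spec:
  assumes "0 \<le> w"
  shows "u_sol w 0 = 1 \<and> (\<forall>t\<ge>0. 1 \<le> u_sol w t \<and>
     (u_sol w has_real_derivative sqrt (A\<^sup>2 * t\<^sup>2 + w) + 1 / u_sol w t) (at t within {0..}))"
proof -
  have "sqrt (A\<^sup>2 * t\<^sup>2 + w) \<le> (A + sqrt w) * (1 + t)" if "0 \<le> t" for t
  proof -
    have "sqrt (A\<^sup>2 * t\<^sup>2 + w) \<le> sqrt (A\<^sup>2 * t\<^sup>2) + sqrt w"
      by (rule sqrt_add_le_add_sqrt) (use assms in simp_all)
    also have "\<dots> = A * t + sqrt w" using A_pos that by (simp add: real_sqrt_mult)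
    also have "\<dots> \<le> (A + sqrt w) * (1 + t)" using A_pos that assms by (simp add: algebra_simps)
    finally show ?thesis .
  qed
  moreover have "continuous_on {0..} (\<lambda>t. sqrt (A\<^sup>2 * t\<^sup>2 + w))"
    by (intro continuous_intros)
  ultimately obtain u where "u 0 = 1" "\<And>t. 0 \<le> t \<Longrightarrow> 1 \<le> u t"
    "\<And>t. 0 \<le> t \<Longrightarrow> (u has_real_derivative sqrt (A\<^sup>2 * t\<^sup>2 + w) + 1 / u t) (at t within {0..})"
    using recip_ode_solution_exists[of "\<lambda>t. sqrt (A\<^sup>2 * t\<^sup>2 + w)" "A + sqrt w"] assms
    by auto
  then have "\<exists>u. u 0 = 1 \<and> (\<forall>t\<ge>0. 1 \<le> u t \<and>
     (u has_real_derivative sqrt (A\<^sup>2 * t\<^sup>2 + w) + 1 / u t) (at t within {0..}))"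
    by blast
  then show ?thesis unfolding u_sol_def by (rule someI_ex)
qed

lemma u_sol_0: "0 \<le> w \<Longrightarrow> u_sol w 0 = 1"
  using u_sol_spec by blast

lemma u_sol_ge_1: "0 \<le> w \<Longrightarrow> 0 \<le> t \<Longrightarrow> 1 \<le> u_sol w t"
  using u_sol_spec by blast

lemma u_sol_has_derivative:
  "0 \<le> w \<Longrightarrow> 0 \<le> t \<Longrightarrow>
   (u_sol w has_real_derivative sqrt (A\<^sup>2 * t\<^sup>2 + w) + 1 / u_sol w t) (at t within {0..})"
  using u_sol_spec by blast

lemma u_sol_has_derivative_Icc:
  "0 \<le> w \<Longrightarrow> 0 \<le> a \<Longrightarrow> t \<in> {a..b} \<Longrightarrow>
   (u_sol w has_real_derivative sqrt (A\<^sup>2 * t\<^sup>2 + w) + 1 / u_sol w t) (at t within {a..b})"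
  by (rule has_field_derivative_subset[OF u_sol_has_derivative]) auto

lemma u_sol_continuous: "0 \<le> w \<Longrightarrow> continuous_on {0..} (u_sol w)"
  by (rule DERIV_continuous_on[OF u_sol_has_derivative]) auto

lemma inverse_u_sol_has_derivative:
  assumes "0 \<le> w" "0 \<le> t"
  shows "((\<lambda>t. 1 / u_sol w t) has_real_derivative jet_rhs A w t (1 / u_sol w t)) (at t within {0..})"
proof -
  have "1 \<le> u_sol w t" by (rule u_sol_ge_1[OF assms])
  then show ?thesis
    by (auto intro!: derivative_eq_intros u_sol_has_derivative[OF assms]
        simp: jet_rhs_def field_simps power2_eq_square)
qed

lemma v_sol_eq: "0 \<le> w \<Longrightarrow> v_sol A w = (\<lambda>t. if t < 0 then 1 else 1 / u_sol w t)"
  unfolding v_sol_def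
proof (rule the_equality)
  assume w: "0 \<le> w"
  let ?v = "\<lambda>t. if t < 0 then 1 else 1 / u_sol w t"
  have deriv: "(?v has_real_derivative jet_rhs A w t (?v t)) (at t within {0..})" if "0 \<le> t" for t
  proof -
    have "((\<lambda>t. 1 / u_sol w t) has_real_derivative jet_rhs A w t (?v t)) (at t within {0..})"
      using inverse_u_sol_has_derivative[OF w that] that by simp
    then show ?thesis by (rule has_field_derivative_transform_within[where d=1]) (use that in auto)
  qed
  then show "?v 0 = 1 \<and> (\<forall>t\<ge>0. (?v has_real_derivative jet_rhs A w t (?v t)) (at t within {0..})) \<and>
      (\<forall>t<0. ?v t = 1)"
    using u_sol_0[OF w] by auto
  fix f assume f: "f 0 = 1 \<and> (\<forall>t\<ge>0. (f has_real_derivative jet_rhs A w t (f t)) (at t within {0..})) \<and>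
      (\<forall>t<0. f t = 1)"
  then have fd: "\<And>t. 0 \<le> t \<Longrightarrow> (f has_real_derivative jet_rhs A w t (f t)) (at t within {0..})"
    by blast
  show "f = ?v"
  proof
    fix t
    show "f t = ?v t"
    proof (cases "t < 0")
      case False
      show ?thesis
      proof (rule jet_ode_unique[OF w, where f=f and g="?v" and T=t])
        fix x assume x: "x \<in> {0..t}"
        show "(f has_real_derivative jet_rhs A w x (f x)) (at x within {0..t})"
          by (rule has_field_derivative_subset[OF fd]) (use x in auto)
        show "(?v has_real_derivative jet_rhs A w x (?v x)) (at x within {0..t})"
          by (rule has_field_derivative_subset[OF deriv]) (use x in auto)
      qed (use f u_sol_0[OF w] False in auto)
    qed (use f in simp)
  qed
qed

lemma v_sol_eq_inverse: "0 \<le> w \<Longrightarrow> 0 \<le> t \<Longrightarrow> v_sol A w t = 1 / u_sol w t"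
  by (simp add: v_sol_eq)

lemma v_sol_has_derivative:
  assumes "0 \<le> w" "0 \<le> t"
  shows "(v_sol A w has_real_derivative jet_rhs A w t (v_sol A w t)) (at t within {0..})"
  using has_field_derivative_transform_within[OF inverse_u_sol_has_derivative[OF assms],
      of 1 "v_sol A w"] assms
  by (simp add: v_sol_eq_inverse[OF assms(1)])

lemma v_sol_continuous: "0 \<le> w \<Longrightarrow> continuous_on {0..T} (v_sol A w)"
  by (rule DERIV_continuous_on[OF has_field_derivative_subset[OF v_sol_has_derivative]]) auto

lemma v_sol_bounds: "0 \<le> w \<Longrightarrow> 0 \<le> t \<Longrightarrow> 0 < v_sol A w t \<and> v_sol A w t \<le> 1"
  using u_sol_ge_1[of w t] by (simp add: v_sol_eq_inverse)

lemma u_sol_strict_mono: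
  assumes w: "0 \<le> w" and "0 \<le> a" "a < b"
  shows "u_sol w a < u_sol w b"
proof (rule has_real_derivative_pos_imp_less[OF \<open>a < b\<close> u_sol_has_derivative_Icc[OF w \<open>0 \<le> a\<close>]])
  fix t assume "t \<in> {a..b}"
  then have "1 \<le> u_sol w t" using u_sol_ge_1[OF w] \<open>0 \<le> a\<close> by auto
  then show "0 < sqrt (A\<^sup>2 * t\<^sup>2 + w) + 1 / u_sol w t"
    using w by (simp add: add_nonneg_pos)
qed

lemma u_sol_mono: "0 \<le> w \<Longrightarrow> 0 \<le> a \<Longrightarrow> a \<le> b \<Longrightarrow> u_sol w a \<le> u_sol w b"
  using u_sol_strict_mono[of w a b] by (cases "a = b") auto

lemma u_sol_inj:
  assumes "0 \<le> w" "0 \<le> s" "0 \<le> t" "u_sol w s = u_sol w t"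
  shows "s = t"
  using u_sol_strict_mono[OF assms(1,2), of t] u_sol_strict_mono[OF assms(1,3), of s] assms(4)
  by (cases s t rule: linorder_cases) simp_all

text \<open>Since \<open>(u\<^sup>2)' = 2 u sqrt (A\<^sup>2 t\<^sup>2 + w) + 2 \<ge> 2\<close>.\<close>

lemma u_sol_square_ge:
  assumes w: "0 \<le> w" and t: "0 \<le> t"
  shows "1 + 2 * t \<le> (u_sol w t)\<^sup>2"
proof -
  let ?u = "u_sol w" and ?s = "\<lambda>x. sqrt (A\<^sup>2 * x\<^sup>2 + w)"
  have "(\<lambda>x. (?u x)\<^sup>2 - 2 * x) 0 \<le> (\<lambda>x. (?u x)\<^sup>2 - 2 * x) t"
  proof (rule has_real_derivative_nonneg_imp_le[OF t])
    fix x assume x: "x \<in> {0..t}"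
    have u1: "1 \<le> ?u x" using u_sol_ge_1[OF w] x by auto
    show "((\<lambda>x. (?u x)\<^sup>2 - 2 * x) has_real_derivative 2 * ?u x * ?s x) (at x within {0..t})"
      using u1 by (auto intro!: derivative_eq_intros u_sol_has_derivative_Icc[OF w order.refl x]
          simp: field_simps)
    show "0 \<le> 2 * ?u x * ?s x" using u1 w by simp
  qed
  then show ?thesis using u_sol_0[OF w] by simp
qed

lemma u_sol_ge_linear:
  assumes w: "0 \<le> w" and t: "0 \<le> t"
  shows "1 + sqrt w * t \<le> u_sol w t"
proof -
  let ?u = "u_sol w"
  have "(\<lambda>x. ?u x - sqrt w * x) 0 \<le> (\<lambda>x. ?u x - sqrt w * x) t"
  proof (rule has_real_derivative_nonneg_imp_le[OF t])
    fix x assume x: "x \<in> {0..t}"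
    show "((\<lambda>x. ?u x - sqrt w * x) has_real_derivative
        sqrt (A\<^sup>2 * x\<^sup>2 + w) + 1 / ?u x - sqrt w) (at x within {0..t})"
      by (auto intro!: derivative_eq_intros u_sol_has_derivative_Icc[OF w order.refl x])
    have "sqrt w \<le> sqrt (A\<^sup>2 * x\<^sup>2 + w)" by simp
    moreover have "0 \<le> 1 / ?u x" using u_sol_ge_1[OF w, of x] x by simp
    ultimately show "0 \<le> sqrt (A\<^sup>2 * x\<^sup>2 + w) + 1 / ?u x - sqrt w" by linarith
  qed
  then show ?thesis using u_sol_0[OF w] by simp
qed

lemma u_sol_mono_param:
  assumes w: "0 \<le> w1" "w1 \<le> w2" and T: "0 \<le> T"
  shows "u_sol w1 T \<le> u_sol w2 T"
proof -
  have w2: "0 \<le> w2" using w by simp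
  let ?u1 = "u_sol w1" and ?u2 = "u_sol w2" and ?s = "\<lambda>w x. sqrt (A\<^sup>2 * x\<^sup>2 + w)"
  have u_ge_1: "1 \<le> ?u1 x" "1 \<le> ?u2 x" if "0 \<le> x" for x
    using u_sol_ge_1[OF w(1)] u_sol_ge_1[OF w2] that by auto
  have "0 \<le> ?u2 T - ?u1 T"
  proof (rule nonneg_by_integrating_factor[OF T, where k="\<lambda>x. 1 / (?u1 x * ?u2 x)"])
    show "continuous_on {0..T} (\<lambda>x. 1 / (?u1 x * ?u2 x))"
      by (intro continuous_intros continuous_on_subset[OF u_sol_continuous[OF w(1)]]
          continuous_on_subset[OF u_sol_continuous[OF w2]]) (use u_ge_1 in fastforce)+
    fix x assume x: "x \<in> {0..T}"
    have eq: "(?s w2 x + 1 / ?u2 x) - (?s w1 x + 1 / ?u1 x)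
        = (?s w2 x - ?s w1 x) - 1 / (?u1 x * ?u2 x) * (?u2 x - ?u1 x)"
      using u_ge_1[of x] x by (simp add: field_simps)
    show "((\<lambda>x. ?u2 x - ?u1 x) has_real_derivative
        (?s w2 x - ?s w1 x) - 1 / (?u1 x * ?u2 x) * (?u2 x - ?u1 x)) (at x within {0..T})"
      by (rule DERIV_cong[OF DERIV_diff[OF u_sol_has_derivative_Icc[OF w2 order.refl x]
            u_sol_has_derivative_Icc[OF w(1) order.refl x]] eq])
    show "0 \<le> ?s w2 x - ?s w1 x" using w by simp
  qed (use u_sol_0[OF w(1)] u_sol_0[OF w2] in simp)
  then show ?thesis by simp
qed

lemma u_sol_param_diff_le:
  assumes w: "0 \<le> w1" "w1 \<le> w2" and T: "0 \<le> T"
  shows "u_sol w2 T - u_sol w1 T \<le> T * (sqrt w2 - sqrt w1)"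
proof -
  have w2: "0 \<le> w2" using w by simp
  let ?u1 = "u_sol w1" and ?u2 = "u_sol w2" and ?s = "\<lambda>w x. sqrt (A\<^sup>2 * x\<^sup>2 + w)"
  define e where "e x = ?u1 x + x * (sqrt w2 - sqrt w1) - ?u2 x" for x
  have "e 0 \<le> e T"
  proof (rule has_real_derivative_nonneg_imp_le[OF T])
    fix x assume x: "x \<in> {0..T}"
    show "(e has_real_derivative
        (?s w1 x + 1 / ?u1 x) + (sqrt w2 - sqrt w1) - (?s w2 x + 1 / ?u2 x)) (at x within {0..T})"
      unfolding e_def
      by (auto intro!: derivative_eq_intros u_sol_has_derivative_Icc[OF w2 order.refl x]
          u_sol_has_derivative_Icc[OF w(1) order.refl x])
    have x0: "0 \<le> x" using x by simp
    have "?s w2 x - ?s w1 x \<le> sqrt w2 - sqrt w1"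
      by (rule sqrt_increment_shift_le) (use w in auto)
    moreover have "1 / ?u2 x \<le> 1 / ?u1 x"
      using u_sol_mono_param[OF w x0] u_sol_ge_1[OF w(1) x0] by (simp add: frac_le)
    ultimately show "0 \<le> (?s w1 x + 1 / ?u1 x) + (sqrt w2 - sqrt w1) - (?s w2 x + 1 / ?u2 x)"
      by simp
  qed
  then show ?thesis unfolding e_def using u_sol_0[OF w(1)] u_sol_0[OF w2] by simp
qed

lemma v_sol_antimono_param:
  assumes "0 \<le> w1" "w1 \<le> w2" "0 \<le> t"
  shows "v_sol A w2 t \<le> v_sol A w1 t"
  using u_sol_mono_param[OF assms] u_sol_ge_1[OF assms(1,3)] assms
  by (simp add: v_sol_eq_inverse frac_le)

lemma v_sol_param_diff_le:
  assumes w: "0 \<le> w1" "w1 \<le> w2" and t: "0 \<le> t"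
  shows "v_sol A w1 t - v_sol A w2 t \<le> t * (sqrt w2 - sqrt w1)"
proof -
  let ?u1 = "u_sol w1 t" and ?u2 = "u_sol w2 t"
  have u_ge_1: "1 \<le> ?u1" "1 \<le> ?u2" using u_sol_ge_1 w t by auto
  have "v_sol A w1 t - v_sol A w2 t = (?u2 - ?u1) / (?u1 * ?u2)"
    using u_ge_1 w t by (simp add: v_sol_eq_inverse field_simps)
  also have "\<dots> \<le> ?u2 - ?u1"
    using u_ge_1 u_sol_mono_param[OF w t] mult_mono[of 1 ?u1 1 ?u2]
    by (intro divide_le_self_of_one_le) auto
  also have "\<dots> \<le> t * (sqrt w2 - sqrt w1)" by (rule u_sol_param_diff_le[OF w t])
  finally show ?thesis .
qed

text \<open>The paper's \<open>sin \<Theta>\<close> along the jet, by \<open>ds = v dt\<close>.\<close>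

definition sin_theta :: "real \<Rightarrow> real \<Rightarrow> real" where
  "sin_theta w t = A * t / sqrt (A\<^sup>2 * t\<^sup>2 + w)"

definition I_integrand :: "real \<Rightarrow> real \<Rightarrow> real" where
  "I_integrand w t = sin_theta w t * v_sol A w t"

lemma I_fun_eq: "I_fun A vn w = integral {0..t_end A vn w} (I_integrand w)"
  by (simp add: I_fun_def I_integrand_def[abs_def] sin_theta_def)

lemma has_integral_sin_theta:
  assumes w: "0 \<le> w" and T: "0 \<le> T"
  shows "(sin_theta w has_integral (sqrt (A\<^sup>2 * T\<^sup>2 + w) - sqrt w) / A) {0..T}"
proof -
  have "(sin_theta w has_integral sqrt (A\<^sup>2 * T\<^sup>2 + w) / A - sqrt (A\<^sup>2 * 0\<^sup>2 + w) / A) {0..T}"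
  proof (rule fundamental_theorem_of_calculus_interior[OF T])
    show "continuous_on {0..T} (\<lambda>t. sqrt (A\<^sup>2 * t\<^sup>2 + w) / A)"
      using A_pos by (intro continuous_intros) auto
    fix x assume "x \<in> {0<..<T}"
    then have "0 < A\<^sup>2 * x\<^sup>2 + w" using A_pos w by (simp add: add_pos_nonneg)
    then show "((\<lambda>t. sqrt (A\<^sup>2 * t\<^sup>2 + w) / A) has_vector_derivative sin_theta w x) (at x)"
      unfolding has_real_derivative_iff_has_vector_derivative[symmetric]
      using A_pos by (auto intro!: derivative_eq_intros simp: sin_theta_def field_simps power2_eq_square)
  qed
  then show ?thesis by (simp add: diff_divide_distrib)
qed

lemma sin_theta_bounds:
  assumes "0 \<le> w" "0 \<le> t"
  shows "0 \<le> sin_theta w t" "sin_theta w t \<le> 1"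
proof -
  show "0 \<le> sin_theta w t" unfolding sin_theta_def using A_pos assms by simp
  have "A * t = sqrt (A\<^sup>2 * t\<^sup>2)" using A_pos assms by (simp add: real_sqrt_mult)
  also have "\<dots> \<le> sqrt (A\<^sup>2 * t\<^sup>2 + w)" using assms by simp
  finally have At: "A * t \<le> sqrt (A\<^sup>2 * t\<^sup>2 + w)" .
  show "sin_theta w t \<le> 1"
  proof (cases "sqrt (A\<^sup>2 * t\<^sup>2 + w) = 0")
    case False
    then have "0 < sqrt (A\<^sup>2 * t\<^sup>2 + w)" using assms by (simp add: order_le_neq_trans)
    then show ?thesis using At by (simp add: sin_theta_def divide_le_eq)
  qed (simp add: sin_theta_def)
qed

lemma sin_theta_antimono_param:
  assumes w: "0 \<le> w1" "w1 \<le> w2" and t: "0 \<le> t"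
  shows "sin_theta w2 t \<le> sin_theta w1 t"
proof (cases "t = 0")
  case False
  then have "0 < sqrt (A\<^sup>2 * t\<^sup>2 + w1)" using A_pos w by (simp add: add_pos_nonneg)
  then show ?thesis
    unfolding sin_theta_def using A_pos t w by (intro divide_left_mono) auto
qed (simp add: sin_theta_def)

lemma I_integrand_bounds:
  assumes "0 \<le> w" "0 \<le> t"
  shows "0 \<le> I_integrand w t" "I_integrand w t \<le> 1"
  using sin_theta_bounds[OF assms] v_sol_bounds[OF assms]
  by (auto simp: I_integrand_def mult_le_one)

text \<open>For \<open>w = 0\<close>, \<open>sin_theta 0 t = 1\<close> for \<open>t > 0\<close> but \<open>sin_theta 0 0 = 0 / 0 = 0\<close>: the
  integrand is continuous only off \<open>t = 0\<close>.\<close>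

lemma I_integrand_integrable:
  assumes w: "0 \<le> w" and "0 \<le> a"
  shows "I_integrand w integrable_on {a..b}"
proof -
  have "I_integrand w integrable_on {0..b}"
  proof (cases "w = 0")
    case True
    have "I_integrand w t = v_sol A w t" if "t \<in> {0..b} - {0}" for t
      using that A_pos True by (simp add: I_integrand_def sin_theta_def real_sqrt_mult)
    then show ?thesis
      by (intro integrable_spike_finite[where S="{0}", OF _ _
            integrable_continuous_real[OF v_sol_continuous[OF w]]]) auto
  next
    case False
    then have "A\<^sup>2 * t\<^sup>2 + w \<noteq> 0" for t
      using w add_nonneg_pos[of "A\<^sup>2 * t\<^sup>2" w] by simp
    then show ?thesis
      unfolding I_integrand_def sin_theta_def
      by (intro integrable_continuous_real continuous_intros v_sol_continuous w) auto
  qed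
  then show ?thesis by (rule integrable_subinterval_real) (use \<open>0 \<le> a\<close> in simp)
qed

lemma integral_sin_theta_diff_bounds:
  assumes w: "0 \<le> w1" "w1 < w2" and T: "0 < T"
  shows "0 < integral {0..T} (\<lambda>t. sin_theta w1 t - sin_theta w2 t)"
    "integral {0..T} (\<lambda>t. sin_theta w1 t - sin_theta w2 t) \<le> (sqrt w2 - sqrt w1) / A"
proof -
  define a where "a = A\<^sup>2 * T\<^sup>2"
  have a: "0 < a" using A_pos T by (simp add: a_def)
  have "integral {0..T} (\<lambda>t. sin_theta w1 t - sin_theta w2 t)
      = ((sqrt (a + w1) - sqrt w1) - (sqrt (a + w2) - sqrt w2)) / A"
    using has_integral_diff[OF has_integral_sin_theta has_integral_sin_theta] w T
    by (simp add: a_def integral_unique diff_divide_distrib)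
  moreover have "sqrt (a + w2) - sqrt w2 < sqrt (a + w1) - sqrt w1"
    by (rule sqrt_increment_strict_antimono[OF a w])
  moreover have "sqrt (a + w1) \<le> sqrt (a + w2)" using w by simp
  ultimately show "0 < integral {0..T} (\<lambda>t. sin_theta w1 t - sin_theta w2 t)"
    "integral {0..T} (\<lambda>t. sin_theta w1 t - sin_theta w2 t) \<le> (sqrt w2 - sqrt w1) / A"
    using A_pos by (simp_all add: divide_right_mono)
qed

context
  fixes vn :: real
  assumes vn_pos: "0 < vn" and vn_less_1: "vn < 1"
begin

lemma u_sol_reaches:
  assumes w: "0 \<le> w"
  obtains t where "0 \<le> t" "u_sol w t = 1 / vn"
proof -
  define b where "b = 1 / vn\<^sup>2"
  have b: "0 \<le> b" by (simp add: b_def)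
  have "(1 / vn)\<^sup>2 = b" by (simp add: b_def power_divide)
  then have "(1 / vn)\<^sup>2 \<le> 1 + 2 * b" using b by linarith
  also have "\<dots> \<le> (u_sol w b)\<^sup>2" by (rule u_sol_square_ge[OF w b])
  finally have sq: "(1 / vn)\<^sup>2 \<le> (u_sol w b)\<^sup>2" .
  have "1 / vn \<le> u_sol w b"
    by (rule power2_le_imp_le[OF sq]) (use u_sol_ge_1[OF w b] in simp)
  moreover have "u_sol w 0 \<le> 1 / vn" using u_sol_0[OF w] vn_pos vn_less_1 by simp
  moreover have "continuous_on {0..b} (u_sol w)"
    by (rule continuous_on_subset[OF u_sol_continuous[OF w]]) auto
  ultimately obtain t where "0 \<le> t" "u_sol w t = 1 / vn"
    using IVT'[of "u_sol w" 0 "1 / vn" b] b by auto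
  then show ?thesis by (rule that)
qed

lemma t_end_eqI:
  assumes w: "0 \<le> w" and t: "0 \<le> t" "u_sol w t = 1 / vn"
  shows "t_end A vn w = t"
  unfolding t_end_def
proof (rule the_equality)
  show "0 \<le> t \<and> v_sol A w t = vn" using t by (simp add: v_sol_eq_inverse[OF w])
  fix t' assume t': "0 \<le> t' \<and> v_sol A w t' = vn"
  then have "1 / u_sol w t' = vn" using v_sol_eq_inverse[OF w, of t'] by simp
  then have "u_sol w t' = u_sol w t"
    using t by (metis inverse_eq_divide inverse_inverse_eq)
  then show "t' = t" using u_sol_inj[OF w] t t' by blast
qed

lemma u_sol_t_end:
  assumes w: "0 \<le> w"
  shows "u_sol w (t_end A vn w) = 1 / vn"
proof -
  obtain t where "0 \<le> t" "u_sol w t = 1 / vn" using u_sol_reaches[OF w] .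
  then show ?thesis using t_end_eqI[OF w] by simp
qed

lemma t_end_pos:
  assumes w: "0 \<le> w"
  shows "0 < t_end A vn w"
proof -
  obtain t where t: "0 \<le> t" "u_sol w t = 1 / vn" using u_sol_reaches[OF w] .
  moreover have "t \<noteq> 0" using t u_sol_0[OF w] vn_less_1 by auto
  ultimately show ?thesis using t_end_eqI[OF w t] by simp
qed

lemma v_sol_t_end: "0 \<le> w \<Longrightarrow> v_sol A w (t_end A vn w) = vn"
  using u_sol_t_end t_end_pos by (simp add: v_sol_eq_inverse less_imp_le)

lemma t_end_unique:
  assumes w: "0 \<le> w" and t: "0 \<le> t" "v_sol A w t = vn"
  shows "t = t_end A vn w"
proof -
  have "1 / u_sol w t = vn" using t v_sol_eq_inverse[OF w t(1)] by simp
  then have "u_sol w t = 1 / vn" by (metis inverse_eq_divide inverse_inverse_eq)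
  then show ?thesis using t_end_eqI[OF w t(1)] by simp
qed

lemma v_sol_ge_vn:
  assumes w: "0 \<le> w" and t: "0 \<le> t" "t \<le> t_end A vn w"
  shows "vn \<le> v_sol A w t"
  using u_sol_mono[OF w t] u_sol_t_end[OF w] u_sol_ge_1[OF w t(1)] vn_pos
  by (simp add: v_sol_eq_inverse[OF w t(1)] field_simps)

lemma t_end_le: "0 \<le> w \<Longrightarrow> sqrt w * t_end A vn w \<le> 1 / vn"
  using u_sol_ge_linear[of w "t_end A vn w"] t_end_pos[of w] u_sol_t_end[of w] by simp

lemma t_end_antimono_param:
  assumes w: "0 \<le> w1" "w1 \<le> w2"
  shows "t_end A vn w2 \<le> t_end A vn w1"
proof (rule ccontr)
  have w2: "0 \<le> w2" using w by simp
  assume "\<not> ?thesis"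
  then have "u_sol w1 (t_end A vn w1) < u_sol w1 (t_end A vn w2)"
    using u_sol_strict_mono[OF w(1)] t_end_pos[OF w(1)] by simp
  also have "\<dots> \<le> u_sol w2 (t_end A vn w2)"
    using u_sol_mono_param[OF w] t_end_pos[OF w2] by simp
  finally show False using u_sol_t_end[OF w(1)] u_sol_t_end[OF w2] by simp
qed

text \<open>On \<open>[t_end w2, t_end w1]\<close> the solution \<open>u_sol w1\<close> grows with slope at least \<open>vn\<close>.\<close>

lemma t_end_param_diff_le:
  assumes w: "0 \<le> w1" "w1 \<le> w2"
  shows "vn * (t_end A vn w1 - t_end A vn w2) \<le> t_end A vn w2 * (sqrt w2 - sqrt w1)"
proof -
  have w2: "0 \<le> w2" using w by simp
  define t1 where "t1 = t_end A vn w1"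
  define t2 where "t2 = t_end A vn w2"
  have t2: "0 \<le> t2" using t_end_pos[OF w2] by (simp add: t2_def)
  have "(\<lambda>x. u_sol w1 x - vn * x) t2 \<le> (\<lambda>x. u_sol w1 x - vn * x) t1"
  proof (rule has_real_derivative_nonneg_imp_le[where a=t2 and b=t1])
    show "t2 \<le> t1" using t_end_antimono_param[OF w] by (simp add: t1_def t2_def)
    fix x assume x: "x \<in> {t2..t1}"
    then have x0: "0 \<le> x" using t2 by simp
    show "((\<lambda>x. u_sol w1 x - vn * x) has_real_derivative
        sqrt (A\<^sup>2 * x\<^sup>2 + w1) + 1 / u_sol w1 x - vn) (at x within {t2..t1})"
      by (auto intro!: derivative_eq_intros u_sol_has_derivative_Icc[OF w(1) t2 x])
    have "vn \<le> 1 / u_sol w1 x"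
      using v_sol_ge_vn[OF w(1) x0] x by (simp add: t1_def v_sol_eq_inverse[OF w(1) x0])
    moreover have "0 \<le> sqrt (A\<^sup>2 * x\<^sup>2 + w1)" using w(1) by simp
    ultimately show "0 \<le> sqrt (A\<^sup>2 * x\<^sup>2 + w1) + 1 / u_sol w1 x - vn" by linarith
  qed
  then have "vn * (t1 - t2) \<le> u_sol w1 t1 - u_sol w1 t2" by (simp add: algebra_simps)
  also have "\<dots> = u_sol w2 t2 - u_sol w1 t2"
    using u_sol_t_end[OF w(1)] u_sol_t_end[OF w2] by (simp add: t1_def t2_def)
  also have "\<dots> \<le> t2 * (sqrt w2 - sqrt w1)" by (rule u_sol_param_diff_le[OF w t2])
  finally show ?thesis by (simp add: t1_def t2_def)
qed

lemma I_integrand_diff_bounds: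
  assumes w: "0 \<le> w1" "w1 \<le> w2" and t: "t \<in> {0..t_end A vn w2}"
  shows "vn * (sin_theta w1 t - sin_theta w2 t) \<le> I_integrand w1 t - I_integrand w2 t"
    "I_integrand w1 t - I_integrand w2 t
       \<le> t_end A vn w2 * (sqrt w2 - sqrt w1) + (sin_theta w1 t - sin_theta w2 t)"
proof -
  have w2: "0 \<le> w2" and t0: "0 \<le> t" using w t by auto
  let ?g1 = "sin_theta w1 t" and ?g2 = "sin_theta w2 t"
  let ?v1 = "v_sol A w1 t" and ?v2 = "v_sol A w2 t"
  have split: "I_integrand w1 t - I_integrand w2 t = ?g1 * (?v1 - ?v2) + (?g1 - ?g2) * ?v2"
    by (simp add: I_integrand_def algebra_simps)
  have g1: "0 \<le> ?g1" "?g1 \<le> 1" using sin_theta_bounds[OF w(1) t0] by auto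
  have g12: "0 \<le> ?g1 - ?g2" using sin_theta_antimono_param[OF w t0] by simp
  have v12: "0 \<le> ?v1 - ?v2" using v_sol_antimono_param[OF w t0] by simp
  have "?v1 - ?v2 \<le> t * (sqrt w2 - sqrt w1)" by (rule v_sol_param_diff_le[OF w t0])
  also have "\<dots> \<le> t_end A vn w2 * (sqrt w2 - sqrt w1)"
    using t w by (intro mult_right_mono) auto
  finally have v12_le: "?v1 - ?v2 \<le> t_end A vn w2 * (sqrt w2 - sqrt w1)" .
  have v2: "vn \<le> ?v2" "?v2 \<le> 1"
    using v_sol_ge_vn[OF w2 t0] t v_sol_bounds[OF w2 t0] by auto
  have "(?g1 - ?g2) * vn \<le> (?g1 - ?g2) * ?v2" "(?g1 - ?g2) * ?v2 \<le> (?g1 - ?g2) * 1"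
    using g12 v2 by (intro mult_left_mono; simp)+
  moreover have "0 \<le> ?g1 * (?v1 - ?v2)" using g1 v12 by simp
  moreover have "?g1 * (?v1 - ?v2) \<le> 1 * (t_end A vn w2 * (sqrt w2 - sqrt w1))"
    using g1 v12 v12_le by (intro mult_mono) auto
  ultimately show "vn * (?g1 - ?g2) \<le> I_integrand w1 t - I_integrand w2 t"
    "I_integrand w1 t - I_integrand w2 t \<le> t_end A vn w2 * (sqrt w2 - sqrt w1) + (?g1 - ?g2)"
    unfolding split by (simp_all add: mult.commute)
qed

lemma I_fun_diff_eq:
  assumes w: "0 \<le> w1" "w1 \<le> w2"
  shows "I_fun A vn w1 - I_fun A vn w2 =
    integral {0..t_end A vn w2} (\<lambda>t. I_integrand w1 t - I_integrand w2 t) +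
    integral {t_end A vn w2..t_end A vn w1} (I_integrand w1)"
proof -
  have w2: "0 \<le> w2" using w by simp
  have "I_fun A vn w1 = integral {0..t_end A vn w2} (I_integrand w1) +
      integral {t_end A vn w2..t_end A vn w1} (I_integrand w1)"
    unfolding I_fun_eq
    by (rule Henstock_Kurzweil_Integration.integral_combine[symmetric,
          OF _ t_end_antimono_param[OF w] I_integrand_integrable])
       (use t_end_pos[OF w2] w in auto)
  then show ?thesis
    by (simp add: I_fun_eq integral_diff I_integrand_integrable w w2)
qed

lemma integral_I_integrand_diff_bounds:
  assumes w: "0 \<le> w1" "w1 < w2"
  defines "t2 \<equiv> t_end A vn w2" and "\<delta> \<equiv> sqrt w2 - sqrt w1"
  shows "0 < integral {0..t2} (\<lambda>t. I_integrand w1 t - I_integrand w2 t)"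
    "integral {0..t2} (\<lambda>t. I_integrand w1 t - I_integrand w2 t) \<le> t2\<^sup>2 * \<delta> + \<delta> / A"
proof -
  have w12: "w1 \<le> w2" and w2: "0 \<le> w2" using w by auto
  have t2: "0 < t2" using t_end_pos[OF w2] by (simp add: t2_def)
  let ?D = "\<lambda>t. sin_theta w1 t - sin_theta w2 t"
  have D: "?D integrable_on {0..t2}"
    using w w2 t2 by (intro integrable_diff has_integral_integrable[OF has_integral_sin_theta]) auto
  have F: "(\<lambda>t. I_integrand w1 t - I_integrand w2 t) integrable_on {0..t2}"
    using w w2 by (intro integrable_diff I_integrand_integrable) auto
  have "0 < vn * integral {0..t2} ?D"
    using integral_sin_theta_diff_bounds(1)[OF w t2] vn_pos by simp
  also have "\<dots> = integral {0..t2} (\<lambda>t. vn * ?D t)" by simp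
  also have "\<dots> \<le> integral {0..t2} (\<lambda>t. I_integrand w1 t - I_integrand w2 t)"
    using I_integrand_diff_bounds(1)[OF w(1) w12]
    by (intro integral_le integrable_on_mult_right D F) (simp add: t2_def)
  finally show "0 < integral {0..t2} (\<lambda>t. I_integrand w1 t - I_integrand w2 t)" .
  have "integral {0..t2} (\<lambda>t. I_integrand w1 t - I_integrand w2 t)
      \<le> integral {0..t2} (\<lambda>t. t2 * \<delta> + ?D t)"
    using I_integrand_diff_bounds(2)[OF w(1) w12]
    by (intro integral_le integrable_add integrable_const_ivl D F) (simp add: t2_def \<delta>_def)
  also have "\<dots> = t2\<^sup>2 * \<delta> + integral {0..t2} ?D"
    using t2 by (subst integral_add[OF integrable_const_ivl D]) (simp add: power2_eq_square)
  also have "\<dots> \<le> t2\<^sup>2 * \<delta> + \<delta> / A"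
    using integral_sin_theta_diff_bounds(2)[OF w t2] by (simp add: \<delta>_def)
  finally show "integral {0..t2} (\<lambda>t. I_integrand w1 t - I_integrand w2 t) \<le> t2\<^sup>2 * \<delta> + \<delta> / A" .
qed

lemma integral_I_integrand_tail_bounds:
  assumes w: "0 \<le> w1" "w1 \<le> w2"
  defines "t1 \<equiv> t_end A vn w1" and "t2 \<equiv> t_end A vn w2"
  shows "0 \<le> integral {t2..t1} (I_integrand w1)"
    "integral {t2..t1} (I_integrand w1) \<le> t2 * (sqrt w2 - sqrt w1) / vn"
proof -
  have t2: "0 < t2" using t_end_pos w by (simp add: t2_def)
  show "0 \<le> integral {t2..t1} (I_integrand w1)"
    using t2 by (intro integral_nonneg I_integrand_integrable I_integrand_bounds(1) w(1)) auto
  have "integral {t2..t1} (I_integrand w1) \<le> integral {t2..t1} (\<lambda>_. 1)"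
    using I_integrand_bounds(2)[OF w(1)] t2
    by (intro integral_le I_integrand_integrable[OF w(1)]) auto
  also have "\<dots> = t1 - t2"
    using t_end_antimono_param[OF w] by (simp add: t1_def t2_def)
  also have "\<dots> \<le> t2 * (sqrt w2 - sqrt w1) / vn"
    using t_end_param_diff_le[OF w] vn_pos by (simp add: t1_def t2_def field_simps)
  finally show "integral {t2..t1} (I_integrand w1) \<le> t2 * (sqrt w2 - sqrt w1) / vn" .
qed

lemma I_fun_strict_antimono:
  assumes "0 \<le> w1" "w1 < w2"
  shows "I_fun A vn w2 < I_fun A vn w1"
  using I_fun_diff_eq[of w1 w2] integral_I_integrand_diff_bounds(1)[OF assms]
    integral_I_integrand_tail_bounds(1)[of w1 w2] assms
  by simp

lemma I_fun_diff_le: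
  assumes w: "0 \<le> w1" "w1 \<le> w2"
  shows "I_fun A vn w1 - I_fun A vn w2 \<le>
    ((t_end A vn 0)\<^sup>2 + 1 / A + t_end A vn 0 / vn) * (sqrt w2 - sqrt w1)"
proof (cases "w1 = w2")
  case False
  then have w_less: "w1 < w2" and w2: "0 \<le> w2" using w by auto
  define t2 \<delta> where "t2 = t_end A vn w2" and "\<delta> = sqrt w2 - sqrt w1"
  have t2: "0 < t2" "t2 \<le> t_end A vn 0"
    using t_end_pos[OF w2] t_end_antimono_param[of 0 w2] w2 by (simp_all add: t2_def)
  have "I_fun A vn w1 - I_fun A vn w2 \<le> (t2\<^sup>2 * \<delta> + \<delta> / A) + t2 * \<delta> / vn"
    using I_fun_diff_eq[OF w] integral_I_integrand_diff_bounds(2)[OF w(1) w_less]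
      integral_I_integrand_tail_bounds(2)[OF w]
    by (simp add: t2_def \<delta>_def)
  also have "\<dots> = (t2\<^sup>2 + 1 / A + t2 / vn) * \<delta>" by (simp add: algebra_simps)
  also have "\<dots> \<le> ((t_end A vn 0)\<^sup>2 + 1 / A + t_end A vn 0 / vn) * \<delta>"
    using t2 vn_pos A_pos w by (intro mult_right_mono add_mono power_mono divide_right_mono)
      (auto simp: \<delta>_def)
  finally show ?thesis by (simp add: \<delta>_def)
qed simp

lemma I_fun_le_t_end: "0 \<le> w \<Longrightarrow> I_fun A vn w \<le> t_end A vn w"
  using integral_le[OF I_integrand_integrable integrable_const_ivl, of w 0 "t_end A vn w" 1]
    I_integrand_bounds(2)[of w] t_end_pos[of w]
  by (simp add: I_fun_eq)

lemma I_fun_sq_lipschitz: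
  "((t_end A vn 0)\<^sup>2 + 1 / A + t_end A vn 0 / vn)-lipschitz_on {0..} (\<lambda>p. I_fun A vn (p\<^sup>2))"
proof (rule lipschitz_onI)
  let ?C = "(t_end A vn 0)\<^sup>2 + 1 / A + t_end A vn 0 / vn"
  have bound: "\<bar>I_fun A vn (p\<^sup>2) - I_fun A vn (q\<^sup>2)\<bar> \<le> ?C * (q - p)" if "0 \<le> p" "p \<le> q" for p q
  proof -
    have sq: "0 \<le> p\<^sup>2" "p\<^sup>2 \<le> q\<^sup>2" using that by (auto intro: power_mono)
    have "I_fun A vn (q\<^sup>2) \<le> I_fun A vn (p\<^sup>2)"
      using I_fun_strict_antimono[of "p\<^sup>2" "q\<^sup>2"] sq by (cases "p\<^sup>2 = q\<^sup>2") auto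
    then show ?thesis using I_fun_diff_le[OF sq] that by simp
  qed
  fix x y :: real assume "x \<in> {0..}" "y \<in> {0..}"
  then show "dist (I_fun A vn (x\<^sup>2)) (I_fun A vn (y\<^sup>2)) \<le> ?C * dist x y"
    using bound[of x y] bound[of y x] by (cases "x \<le> y") (auto simp: dist_real_def abs_minus_commute)
qed (use t_end_pos[of 0] A_pos vn_pos in simp)

text \<open>\<open>I(w) \<le> t_end(w) \<le> 1 / (vn sqrt w)\<close>.\<close>

lemma I_fun_less:
  assumes "0 < B"
  obtains w where "0 < w" "I_fun A vn w < B"
proof
  define p where "p = 1 / (vn * B) + 1"
  have p: "0 < p" using assms vn_pos by (simp add: p_def add_pos_pos)
  show "0 < p\<^sup>2" using p by simp
  have "I_fun A vn (p\<^sup>2) \<le> t_end A vn (p\<^sup>2)" by (rule I_fun_le_t_end) simp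
  also have "\<dots> \<le> 1 / (vn * p)"
    using t_end_le[of "p\<^sup>2"] p vn_pos by (simp add: field_simps)
  also have "\<dots> < B"
  proof -
    have "1 < vn * B * p" using assms vn_pos by (simp add: p_def field_simps)
    then show ?thesis using p vn_pos by (simp add: field_simps)
  qed
  finally show "I_fun A vn (p\<^sup>2) < B" .
qed

lemma I_fun_attains:
  assumes "0 < B" "B < I_fun A vn 0"
  obtains w where "0 < w" "I_fun A vn w = B"
proof -
  obtain w1 where w1: "0 < w1" "I_fun A vn w1 < B" using I_fun_less[OF assms(1)] .
  have "continuous_on {0..sqrt w1} (\<lambda>p. I_fun A vn (p\<^sup>2))"
    by (rule lipschitz_on_continuous_on[OF lipschitz_on_subset[OF I_fun_sq_lipschitz]]) auto
  then obtain p where p: "0 \<le> p" "p \<le> sqrt w1" "I_fun A vn (p\<^sup>2) = B"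
    using IVT2'[of "\<lambda>p. I_fun A vn (p\<^sup>2)" "sqrt w1" B 0] w1 assms by auto
  then have "p \<noteq> 0" using assms by auto
  then show ?thesis using p that[of "p\<^sup>2"] by simp
qed

lemma I_fun_inj:
  assumes "0 \<le> w1" "0 \<le> w2" "I_fun A vn w1 = I_fun A vn w2"
  shows "w1 = w2"
  using I_fun_strict_antimono[of w1 w2] I_fun_strict_antimono[of w2 w1] assms
  by (cases w1 w2 rule: linorder_cases) auto

lemma jet_solution_imp_v_sol:
  assumes "jet_solution A B vn w te v"
  shows "0 < w" "te = t_end A vn w" "\<forall>t\<in>{0..te}. v t = v_sol A w t" "I_fun A vn w = B"
proof -
  obtain v' where w: "0 < w" and te: "0 < te" and v0: "v 0 = 1" and vte: "v te = vn"
    and int: "integral {0..te} (\<lambda>t. A * t * v t / sqrt (A\<^sup>2 * t\<^sup>2 + w)) = B"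
    and dv: "\<And>t. t \<in> {0..te} \<Longrightarrow> (v has_real_derivative v' t) (at t within {0..te})"
      "\<And>t. t \<in> {0..te} \<Longrightarrow> v' t = jet_rhs A w t (v t)"
    using assms unfolding jet_solution_def by blast
  show "0 < w" by (rule w)
  have eq: "v t = v_sol A w t" if "t \<in> {0..te}" for t
  proof (rule jet_ode_unique[where f=v and T=te])
    fix x assume x: "x \<in> {0..te}"
    show "(v has_real_derivative jet_rhs A w x (v x)) (at x within {0..te})"
      using dv[OF x] by simp
    show "(v_sol A w has_real_derivative jet_rhs A w x (v_sol A w x)) (at x within {0..te})"
      by (rule has_field_derivative_subset[OF v_sol_has_derivative]) (use w x in auto)
  qed (use w v0 that in \<open>auto simp: v_sol_eq_inverse u_sol_0\<close>)
  then show "\<forall>t\<in>{0..te}. v t = v_sol A w t" by blast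
  show te_eq: "te = t_end A vn w"
    using t_end_unique[of w te] eq[of te] w te vte by simp
  have "integral {0..te} (\<lambda>t. A * t * v t / sqrt (A\<^sup>2 * t\<^sup>2 + w)) = I_fun A vn w"
    unfolding I_fun_def te_eq[symmetric] using eq by (intro integral_cong) simp
  then show "I_fun A vn w = B" using int by simp
qed

lemma v_sol_jet_solution:
  assumes w: "0 < w" and I: "I_fun A vn w = B"
  shows "jet_solution A B vn w (t_end A vn w) (v_sol A w)"
proof -
  let ?te = "t_end A vn w" and ?v' = "\<lambda>t. jet_rhs A w t (v_sol A w t)"
  have "continuous_on {0..?te} ?v'"
    unfolding jet_rhs_def using w by (intro continuous_intros v_sol_continuous) simp_all
  moreover have "(v_sol A w has_real_derivative ?v' t) (at t within {0..?te})" if "t \<in> {0..?te}" for t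
    by (rule has_field_derivative_subset[OF v_sol_has_derivative]) (use w that in auto)
  ultimately show ?thesis
    unfolding jet_solution_def using w I t_end_pos[of w] v_sol_t_end[of w] u_sol_0[of w]
    by (auto simp: I_fun_def v_sol_eq_inverse)
qed

end

end

theorem theorem4p7:
  fixes A B vn :: real
  assumes "A > 0" and "B > 0" and "0 < vn" and "vn < 1"
  shows "((\<exists>w te v. jet_solution A B vn w te v) \<longleftrightarrow> I_fun A vn 0 > B) \<and>
         (\<forall>w1 te1 v1 w2 te2 v2. jet_solution A B vn w1 te1 v1 \<longrightarrow>
           jet_solution A B vn w2 te2 v2 \<longrightarrow>
           w1 = w2 \<and> te1 = te2 \<and> (\<forall>t\<in>{0..te1}. v1 t = v2 t))"
proof -
  interpret jet_model A by unfold_locales (rule assms(1))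
  note vn = assms(3,4)
  note solution = jet_solution_imp_v_sol[OF vn]
  have "(\<exists>w te v. jet_solution A B vn w te v) \<longleftrightarrow> B < I_fun A vn 0"
  proof
    assume "\<exists>w te v. jet_solution A B vn w te v"
    then obtain w te v where "jet_solution A B vn w te v" by blast
    then show "B < I_fun A vn 0"
      using solution I_fun_strict_antimono[OF vn, of 0 w] by auto
  next
    assume "B < I_fun A vn 0"
    with I_fun_attains[OF vn assms(2)] obtain w where "0 < w" "I_fun A vn w = B" by blast
    then show "\<exists>w te v. jet_solution A B vn w te v" using v_sol_jet_solution[OF vn] by blast
  qed
  moreover have "w1 = w2 \<and> te1 = te2 \<and> (\<forall>t\<in>{0..te1}. v1 t = v2 t)"
    if "jet_solution A B vn w1 te1 v1" "jet_solution A B vn w2 te2 v2" for w1 te1 v1 w2 te2 v2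
  proof -
    have "w1 = w2" using solution[OF that(1)] solution[OF that(2)] I_fun_inj[OF vn, of w1 w2] by auto
    then show ?thesis using solution[OF that(1)] solution[OF that(2)] by auto
  qed
  ultimately show ?thesis by blast
qed

end
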